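(* Let $\tau=e^{2\pi i/3}$ and define on $\mathbb{C}$ the maps $q_1(t)=-t-1$, $q_\tau(t)=-t-\tau$, $q_{\tau^2}(t)=-t-\tau^2$. Consider the infinite directed graph with vertices $a_{i,j}$ (row $1$: $a_{1,1}$; rows $2,3$: $a_{i,1},a_{i,2}$; for $i\ge4$, $1\le j\le \frac i2+1$ if $i$ even and $1\le j\le\frac{i-1}{2}+1$ if $i$ odd) and labelled edges: $a_{1,1}\to a_{2,1}$ labelled $q_\tau$, $a_{1,1}\to a_{2,2}$ labelled $q_{\tau^2}$; for every $k\ge1$ and $1\le j\le k+1$: $a_{2k,j}\to a_{2k+1,j}$ labelled $q_1$, $a_{2k+1,j}\to a_{2k+2,j}$ labelled $q_\tau$, $a_{2k+1,j}\to a_{2k+2,j+1}$ labelled $q_{\tau^2}$. Assign $t(1,1)=-2$ and, for a vertex $a_{i,j}$, let $t(i,j)$ be the value obtained from $-2$ by applying successively the maps labelling the edges of a directed path from $a_{1,1}$ to $a_{i,j}$. Then \[t(1,1)=-2,\quad t(2,1)=2-\tau,\quad t(3,1)=-3+\tau;\] for all $i\ge2$: \[t(2i,1)=t(2,1)+(i-1)(1-\tau),\qquad t(2i+1,1)=t(3,1)-(i-1)(1-\tau);\] and for all $i\ge2$ and $2\le j\le i+1$: \[t(2i,j)=t(2i,1)+(j-1)(1+2\tau),\qquad t(2i+1,j)=t(2i+1,1)-(j-1)(1+2\tau).\]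
   Context: In the paper, $t(i,j)$ is the parameter of the elliptic pencil (member of Lins Neto's family of foliations $\Omega+t\,\Xi=0$) at entry $a_{i,j}$ of a diagram of bifurcations of quadratic Cremona maps $Q_1,Q_\tau,Q_{\tau^2}$ preserving the dual Hesse arrangement, starting from the pencil with parameter $-2$; the strict transform under $Q_1,Q_\tau,Q_{\tau^2}$ changes the parameter by $q_1,q_\tau,q_{\tau^2}$ respectively, which is the recursion stated above. Note $1+\tau+\tau^2=0$. *)

theory Defs
  imports Complex_Main
begin

definition tau :: complex where
  "tau = exp (2 * pi * \<i> / 3)"

definition q1 :: "complex \<Rightarrow> complex" where "q1 t = - t - 1"
definition qtau :: "complex \<Rightarrow> complex" where "qtau t = - t - tau"
definition qtau2 :: "complex \<Rightarrow> complex" where "qtau2 t = - t - tau^2"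

text \<open>pv i j v: there is a directed path from a(1,1) to a(i,j) in the bifurcation
  diagram such that applying successively the edge labels to -2 gives v.\<close>
inductive pv :: "nat \<Rightarrow> nat \<Rightarrow> complex \<Rightarrow> bool" where
  start: "pv 1 1 (-2)"
| e_tau0: "pv 1 1 v \<Longrightarrow> pv 2 1 (qtau v)"
| e_tau20: "pv 1 1 v \<Longrightarrow> pv 2 2 (qtau2 v)"
| e_one: "\<lbrakk>k \<ge> 1; 1 \<le> j; j \<le> k + 1; pv (2*k) j v\<rbrakk> \<Longrightarrow> pv (2*k+1) j (q1 v)"
| e_tau: "\<lbrakk>k \<ge> 1; 1 \<le> j; j \<le> k + 1; pv (2*k+1) j v\<rbrakk> \<Longrightarrow> pv (2*k+2) j (qtau v)"
| e_tau2: "\<lbrakk>k \<ge> 1; 1 \<le> j; j \<le> k + 1; pv (2*k+1) j v\<rbrakk> \<Longrightarrow> pv (2*k+2) (j+1) (qtau2 v)"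

definition tval :: "nat \<Rightarrow> nat \<Rightarrow> complex" where
  "tval i j = (THE v. pv i j v)"

end

theory Submission
  imports Defs
begin

text \<open>Since \<open>qtau \<circ> q1\<close> is the translation by \<open>1 - \<tau>\<close> and \<open>qtau2 \<circ> q1\<close> the
  translation by \<open>1 - \<tau>\<^sup>2 = (1 - \<tau>) + (1 + 2\<tau>)\<close>, going from row 2k to row 2k + 2 adds
  \<open>1 - \<tau>\<close>, plus \<open>1 + 2\<tau>\<close> when the column index increases.  So the value at a(2k,j) is
  affine in k and j, and the value at a(2k+1,j) is its image under \<open>q1\<close>.  Rule induction
  shows that every path yields this value, so t(i,j) is well defined, and induction on k
  shows that every vertex is reached.\<close>

lemma tau_eq_Complex: "tau = Complex (-1/2) (sqrt 3 / 2)"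
proof -
  have "tau = cis (2 * pi / 3)"
    unfolding tau_def cis_conv_exp by (simp add: mult.commute)
  also have "\<dots> = Complex (-1/2) (sqrt 3 / 2)"
    by (simp add: cis.ctr cos_120 sin_120)
  finally show ?thesis .
qed

lemma tau_squared: "tau^2 = - 1 - tau"
  unfolding tau_eq_Complex by (simp add: power2_eq_square complex_eq_iff field_simps)

definition even_row_value :: "nat \<Rightarrow> nat \<Rightarrow> complex" where
  "even_row_value k j = 2 - tau + (of_nat k - 1) * (1 - tau) + (of_nat j - 1) * (1 + 2 * tau)"

definition diagram_value :: "nat \<Rightarrow> nat \<Rightarrow> complex" where
  "diagram_value i j =
     (if i = 1 then -2
      else if even i then even_row_value (i div 2) j
      else q1 (even_row_value (i div 2) j))"

lemma qtau_start: "qtau (-2) = even_row_value 1 1"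
  by (simp add: qtau_def even_row_value_def)

lemma qtau2_start: "qtau2 (-2) = even_row_value 1 2"
  by (simp add: qtau2_def even_row_value_def tau_squared)

lemma qtau_q1_even_row_value: "qtau (q1 (even_row_value k j)) = even_row_value (Suc k) j"
  by (simp add: qtau_def q1_def even_row_value_def algebra_simps)

lemma qtau2_q1_even_row_value:
  "qtau2 (q1 (even_row_value k j)) = even_row_value (Suc k) (Suc j)"
  by (simp add: qtau2_def q1_def even_row_value_def tau_squared algebra_simps)

lemma pv_imp_diagram_value: "pv i j v \<Longrightarrow> v = diagram_value i j"
proof (induction rule: pv.induct)
  case start
  then show ?case by (simp add: diagram_value_def)
next
  case (e_tau0 v)
  then show ?case by (simp add: diagram_value_def qtau_start)
next
  case (e_tau20 v)
  then show ?case by (simp add: diagram_value_def qtau2_start)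
next
  case (e_one k j v)
  then show ?case by (simp add: diagram_value_def)
next
  case (e_tau k j v)
  then show ?case
    using qtau_q1_even_row_value[of k j] by (simp add: diagram_value_def)
next
  case (e_tau2 k j v)
  then show ?case
    using qtau2_q1_even_row_value[of k j] by (simp add: diagram_value_def)
qed

lemma pv_even_odd_rows:
  assumes "1 \<le> k" "1 \<le> j" "j \<le> k + 1"
  shows "pv (2*k) j (even_row_value k j) \<and> pv (2*k+1) j (q1 (even_row_value k j))"
  using assms
proof (induction k arbitrary: j rule: nat_induct_at_least)
  case base
  then consider "j = 1" | "j = 2" by linarith
  then have "pv 2 j (even_row_value 1 j)"
    by cases (metis pv.start pv.e_tau0 pv.e_tau20 qtau_start qtau2_start)+
  moreover from this have "pv 3 j (q1 (even_row_value 1 j))"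
    using pv.e_one[of 1 j] base by simp
  ultimately show ?case by simp
next
  case (Suc k)
  have even: "pv (2*k+2) j (even_row_value (Suc k) j)"
  proof (cases "j \<le> k + 1")
    case True
    with Suc have "pv (2*k+1) j (q1 (even_row_value k j))" by simp
    then have "pv (2*k+2) j (qtau (q1 (even_row_value k j)))"
      by (rule pv.e_tau[rotated 3]) (use Suc True in simp_all)
    then show ?thesis by (simp add: qtau_q1_even_row_value)
  next
    case False
    with Suc have j: "j = Suc (k + 1)" by simp
    from Suc have "pv (2*k+1) (k+1) (q1 (even_row_value k (k+1)))" by simp
    then have "pv (2*k+2) (k+1+1) (qtau2 (q1 (even_row_value k (k+1))))"
      by (rule pv.e_tau2[rotated 3]) (use Suc in simp_all)
    then show ?thesis using j by (simp add: qtau2_q1_even_row_value)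
  qed
  then have "pv (2*(k+1)+1) j (q1 (even_row_value (Suc k) j))"
    by (intro pv.e_one) (use Suc in simp_all)
  with even show ?case by simp
qed

lemma tval_eqI: "pv i j v \<Longrightarrow> tval i j = v"
  unfolding tval_def by (rule the_equality) (auto dest: pv_imp_diagram_value)

lemma tval_even_row:
  "1 \<le> k \<Longrightarrow> 1 \<le> j \<Longrightarrow> j \<le> k + 1 \<Longrightarrow> tval (2*k) j = even_row_value k j"
  using pv_even_odd_rows tval_eqI by blast

lemma tval_odd_row:
  "1 \<le> k \<Longrightarrow> 1 \<le> j \<Longrightarrow> j \<le> k + 1 \<Longrightarrow> tval (2*k+1) j = - even_row_value k j - 1"
  using pv_even_odd_rows tval_eqI unfolding q1_def by blast

lemma tval_closed_form:
  assumes "1 \<le> i" "1 \<le> j" "j \<le> i + 1"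
  shows "tval (2*i) j = (2 - tau) + of_nat (i - 1) * (1 - tau) + of_nat (j - 1) * (1 + 2 * tau)"
    and "tval (2*i+1) j = (-3 + tau) - of_nat (i - 1) * (1 - tau) - of_nat (j - 1) * (1 + 2 * tau)"
  using assms tval_even_row[OF assms] tval_odd_row[OF assms]
  by (simp_all add: even_row_value_def of_nat_diff algebra_simps)

theorem mainTheorem2:
  shows "tval 1 1 = -2 \<and> tval 2 1 = 2 - tau \<and> tval 3 1 = -3 + tau
    \<and> (\<forall>i::nat. i \<ge> 2 \<longrightarrow>
          tval (2*i) 1 = tval 2 1 + of_nat (i - 1) * (1 - tau)
        \<and> tval (2*i+1) 1 = tval 3 1 - of_nat (i - 1) * (1 - tau))
    \<and> (\<forall>i j::nat. i \<ge> 2 \<longrightarrow> 2 \<le> j \<longrightarrow> j \<le> i + 1 \<longrightarrow>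
          tval (2*i) j = tval (2*i) 1 + of_nat (j - 1) * (1 + 2 * tau)
        \<and> tval (2*i+1) j = tval (2*i+1) 1 - of_nat (j - 1) * (1 + 2 * tau))"
proof (intro conjI allI impI)
  show "tval 1 1 = -2" by (rule tval_eqI) (rule pv.start)
  show t21: "tval 2 1 = 2 - tau" and t31: "tval 3 1 = -3 + tau"
    using tval_closed_form[of 1 1] by simp_all
  fix i j :: nat
  assume "2 \<le> i"
  then show "tval (2*i) 1 = tval 2 1 + of_nat (i - 1) * (1 - tau)"
    and "tval (2*i+1) 1 = tval 3 1 - of_nat (i - 1) * (1 - tau)"
    using tval_closed_form[of i 1] t21 t31 by simp_all
  assume "2 \<le> j" "j \<le> i + 1"
  with \<open>2 \<le> i\<close> show "tval (2*i) j = tval (2*i) 1 + of_nat (j - 1) * (1 + 2 * tau)"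
    and "tval (2*i+1) j = tval (2*i+1) 1 - of_nat (j - 1) * (1 + 2 * tau)"
    using tval_closed_form[of i 1] tval_closed_form[of i j] by simp_all
qed

end
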